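(* For all $m\ge1$, $\bar\delta_{2m,1}=\frac{m}{2(2m-1)}$ and $\bar\delta_{2m+1,1}=\frac{m+1}{2(2m+1)}$.
   Context: For integers $\lambda\ge0$, $d\ge1$, write $\lambda=\sum_{i=1}^d\binom{k_i}{i}$ uniquely with $k_d>\cdots>k_1\ge0$ and set $\lambda^{[d]}=\sum_{i=1}^d\binom{k_i}{i+1}$. For $n>d$ and $0\le\lambda\le\binom nd$ let $\delta_{n,d}(\lambda)=\lambda/\binom nd-\lambda^{[d]}/\binom n{d+1}$, and let $\bar\delta_{n,d}=\max_{0\le\lambda\le\binom nd}\delta_{n,d}(\lambda)$ (the paper denotes this maximum simply by $\delta_{n,d}$ in this part). *)

theory Defs
  imports Complex_Main
begin

text \<open>d-cascade (Macaulay) representation: lam = sum_{i=1}^d (k_i choose i)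
  with k_d > ... > k_1 >= 0.  The sequence k is normalised to be 0 outside {1..d}
  so that it is unique.\<close>
definition cascade_rep :: "nat \<Rightarrow> nat \<Rightarrow> (nat \<Rightarrow> nat) \<Rightarrow> bool" where
  "cascade_rep d lam k \<longleftrightarrow>
     (\<forall>i. 1 \<le> i \<and> i < d \<longrightarrow> k i < k (Suc i)) \<and>
     (\<forall>i. i \<notin> {1..d} \<longrightarrow> k i = 0) \<and>
     lam = (\<Sum>i=1..d. k i choose i)"

definition cascade_seq :: "nat \<Rightarrow> nat \<Rightarrow> (nat \<Rightarrow> nat)" where
  "cascade_seq d lam = (THE k. cascade_rep d lam k)"

definition upper_shadow :: "nat \<Rightarrow> nat \<Rightarrow> nat" where
  "upper_shadow d lam = (\<Sum>i=1..d. cascade_seq d lam i choose (i + 1))"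

definition delta :: "nat \<Rightarrow> nat \<Rightarrow> nat \<Rightarrow> real" where
  "delta n d lam = real lam / real (n choose d) - real (upper_shadow d lam) / real (n choose (d + 1))"

definition delta_bar :: "nat \<Rightarrow> nat \<Rightarrow> real" where
  "delta_bar n d = Max (delta n d ` {0..n choose d})"

end

theory Submission
  imports Defs
begin

text \<open>For \<open>d = 1\<close> the cascade representation of \<open>lam\<close> is just \<open>lam = lam choose 1\<close>,
  so the upper shadow is \<open>lam choose 2\<close> and \<open>delta n 1 lam = lam (n - lam) / (n (n - 1))\<close>.
  The integer quadratic \<open>lam (n - lam)\<close> on \<open>0 \<le> lam \<le> n\<close> is maximal at \<open>lam = n div 2\<close>.\<close>

lemma cascade_seq_one: "cascade_seq 1 lam = (\<lambda>i. if i = 1 then lam else 0)"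
  unfolding cascade_seq_def
proof (rule the_equality)
  show "cascade_rep 1 lam (\<lambda>i. if i = 1 then lam else 0)"
    unfolding cascade_rep_def by auto
  show "k = (\<lambda>i. if i = 1 then lam else 0)" if "cascade_rep 1 lam k" for k
    using that unfolding cascade_rep_def by fastforce
qed

lemma upper_shadow_one: "upper_shadow 1 lam = lam choose 2"
  unfolding upper_shadow_def cascade_seq_one by (simp add: numeral_2_eq_2)

lemma real_choose_two: "real (n choose 2) = real n * (real n - 1) / 2"
proof -
  have "even (n * (n - 1))" by (cases "even n") auto
  then have "real (n * (n - 1) div 2) = real (n * (n - 1)) / 2"
    by (simp add: real_of_nat_div)
  then show ?thesis by (cases n) (simp_all add: choose_two algebra_simps)
qed

lemma delta_one:
  assumes "n \<ge> 2"
  shows "delta n 1 lam = real lam * (real n - real lam) / (real n * (real n - 1))"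
proof -
  have "real (n choose (1 + 1)) = real n * (real n - 1) / 2"
    by (simp only: one_add_one real_choose_two)
  then have "delta n 1 lam
      = real lam / real n - (real lam * (real lam - 1) / 2) / (real n * (real n - 1) / 2)"
    unfolding delta_def upper_shadow_one real_choose_two by simp
  also have "\<dots> = real lam * (real n - real lam) / (real n * (real n - 1))"
    using assms by (simp add: field_simps)
  finally show ?thesis .
qed

text \<open>With \<open>h = n div 2\<close> and \<open>r = n mod 2\<close>, the difference of the two sides is
  \<open>(l - h)(l - h - r)\<close>, a product of two factors of equal sign because \<open>l\<close> and \<open>h\<close>
  are integers and \<open>r \<le> 1\<close>.\<close>
lemma mult_diff_le_half:
  "real l * (real n - real l) \<le> real (n div 2) * (real n - real (n div 2))"
proof -
  define h where "h = n div 2"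
  define r where "r = n mod 2"
  have "n = 2 * h + r" unfolding h_def r_def by simp
  then have n: "real n = 2 * real h + real r" by simp
  have r: "real r \<le> 1" unfolding r_def by simp
  have "0 \<le> (real l - real h) * (real l - real h - real r)"
  proof (cases "l \<le> h")
    case True
    then show ?thesis by (intro mult_nonpos_nonpos) auto
  next
    case False
    then have "real l \<ge> real h + 1" by simp
    with r show ?thesis by (intro mult_nonneg_nonneg) auto
  qed
  then show ?thesis
    unfolding h_def[symmetric] n by (simp add: algebra_simps)
qed

lemma delta_bar_one:
  assumes "n \<ge> 2"
  shows "delta_bar n 1 = real (n div 2) * (real n - real (n div 2)) / (real n * (real n - 1))"
  unfolding delta_bar_def
proof (rule Max_eqI)
  have pos: "real n * (real n - 1) > 0" using assms by simp
  show "finite (delta n 1 ` {0..n choose 1})" by simp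
  show "y \<le> real (n div 2) * (real n - real (n div 2)) / (real n * (real n - 1))"
    if "y \<in> delta n 1 ` {0..n choose 1}" for y
  proof -
    from that obtain l where "l \<le> n" and "y = delta n 1 l" by auto
    then show ?thesis
      unfolding delta_one[OF assms] using pos mult_diff_le_half[of l n]
      by (auto intro: divide_right_mono)
  qed
  show "real (n div 2) * (real n - real (n div 2)) / (real n * (real n - 1))
      \<in> delta n 1 ` {0..n choose 1}"
  proof (rule image_eqI[where x = "n div 2"])
    show "real (n div 2) * (real n - real (n div 2)) / (real n * (real n - 1))
        = delta n 1 (n div 2)"
      by (rule delta_one[OF assms, symmetric])
  qed simp
qed

theorem proposition6p1:
  fixes m :: nat
  assumes "m \<ge> 1"
  shows "delta_bar (2*m) 1 = real m / (2 * (2 * real m - 1))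
    \<and> delta_bar (2*m+1) 1 = real (m+1) / (2 * (2 * real m + 1))"
proof
  have "delta_bar (2*m) 1 = real m * real m / (2 * real m * (2 * real m - 1))"
    using delta_bar_one[of "2*m"] assms by simp
  also have "\<dots> = real m / (2 * (2 * real m - 1))"
    using assms by simp
  finally show "delta_bar (2*m) 1 = real m / (2 * (2 * real m - 1))" .
next
  have "delta_bar (2*m+1) 1 = real m * (real m + 1) / ((2 * real m + 1) * (2 * real m))"
    using delta_bar_one[of "2*m+1"] assms by simp
  also have "\<dots> = (real (m+1) * real m) / ((2 * (2 * real m + 1)) * real m)"
    by (simp add: algebra_simps)
  also have "\<dots> = real (m+1) / (2 * (2 * real m + 1))"
    using assms by simp
  finally show "delta_bar (2*m+1) 1 = real (m+1) / (2 * (2 * real m + 1))" .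
qed

end
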